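(* Let $\mathcal{H}$ be a separable infinite-dimensional complex Hilbert space, let $T\in\mathscr{B}(\mathcal{H})$ have dense range and let $x_0\in\mathcal{H}$ be nonzero. Then the map $\varepsilon\mapsto y_{x_0,\varepsilon}$, from the interval $]0,\|x_0\|[$ to $\mathcal{H}$, is (real-)analytic.
   Context: For $T\in\mathscr{B}(\mathcal{H})$ with dense range, $x_0\neq 0$ and $0<\varepsilon<\|x_0\|$, the extremal vector $y_{x_0,\varepsilon}$ is the unique vector $y_0\in\mathcal{H}$ with $\|Ty_0-x_0\|\leqslant\varepsilon$ and $\|y_0\|=\inf\{\|y\|:\|Ty-x_0\|\leqslant\varepsilon\}$. *)

theory Defs
  imports "HOL-Analysis.Analysis"
begin

text \<open>A complex Hilbert space: a real Hilbert space (norm induced by the real part of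
  the inner product) equipped with a complex scalar multiplication extending the real one
  and compatible with the norm. By polarization this is exactly a complex Hilbert space.\<close>

class complex_hilbert = real_inner + complete_space +
  fixes scaleC :: "complex \<Rightarrow> 'a \<Rightarrow> 'a" (infixr \<open>*\<^sub>C\<close> 75)
  assumes scaleC_of_real: "scaleC (complex_of_real r) x = r *\<^sub>R x"
    and scaleC_add_right: "scaleC a (x + y) = scaleC a x + scaleC a y"
    and scaleC_add_left: "scaleC (a + b) x = scaleC a x + scaleC b x"
    and scaleC_scaleC: "scaleC a (scaleC b x) = scaleC (a * b) x"
    and norm_scaleC: "norm (scaleC a x) = cmod a * norm x"

definition bounded_clinear_op :: "('a::complex_hilbert \<Rightarrow> 'b::complex_hilbert) \<Rightarrow> bool" where
  "bounded_clinear_op T \<longleftrightarrow> bounded_linear T \<and> (\<forall>c x. T (c *\<^sub>C x) = c *\<^sub>C T x)"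

definition separable_space :: "'a::topological_space itself \<Rightarrow> bool" where
  "separable_space _ \<longleftrightarrow> (\<exists>D::'a set. countable D \<and> closure D = UNIV)"

definition infinite_dimensional :: "'a::real_vector itself \<Rightarrow> bool" where
  "infinite_dimensional _ \<longleftrightarrow> \<not> (\<exists>S::'a set. finite S \<and> span S = UNIV)"

definition extremal_vector :: "('a::real_normed_vector \<Rightarrow> 'b::real_normed_vector) \<Rightarrow> 'b \<Rightarrow> real \<Rightarrow> 'a" where
  "extremal_vector T x0 \<epsilon> =
     (THE y0. norm (T y0 - x0) \<le> \<epsilon> \<and> norm y0 = Inf {norm y | y. norm (T y - x0) \<le> \<epsilon>})"

definition real_analytic_on :: "(real \<Rightarrow> 'a::real_normed_vector) \<Rightarrow> real set \<Rightarrow> bool" where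
  "real_analytic_on f S \<longleftrightarrow>
     (\<forall>t0\<in>S. \<exists>r>0. \<exists>a::nat \<Rightarrow> 'a.
        \<forall>t. \<bar>t - t0\<bar> < r \<longrightarrow> (\<lambda>n. ((t - t0) ^ n) *\<^sub>R a n) sums f t)"

end

(*
  For g > 0 let y_g = (T* T + g)^-1 T* x0 be the minimizer of the Tikhonov functional
  norm (T y - x0)^2 + g norm y^2 and d(g) = norm (T y_g - x0) its discrepancy. With g as a
  Lagrange multiplier, y_g is the extremal vector for the radius d(g), and d maps ]0, oo[ onto
  ]0, norm x0[: it is continuous, tends to 0 at 0 because T has dense range, and exceeds any
  radius below norm x0 for large g.

  Near a fixed g0 > 0 the resolvent identity expands y_g as a power series in g0 - g. The
  optimal value m(g) of the Tikhonov functional is then a power series as well, with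
  m'(g) = norm y_g^2, so d^2 = m - g m' extends holomorphically, and its derivative at g0 is
  -g0 m''(g0) > 0. Hence the multiplier belonging to the radius e is, near d(g0), the restriction
  of a holomorphic function that is real on the real axis, and substituting it into the power
  series of y_g gives a power series for the extremal vector around every radius.
*)

theory Submission
  imports Defs "HOL-Complex_Analysis.Complex_Analysis"
begin

section \<open>Tikhonov regularization\<close>

lemma nonneg_quadratic_imp_linear_coeff_zero:
  fixes L M :: real
  assumes nonneg: "\<And>t. 0 \<le> 2 * t * L + t\<^sup>2 * M"
  shows "L = 0"
proof (rule ccontr)
  assume "L \<noteq> 0"
  define a where "a = \<bar>M\<bar> + 1"
  have "a > 0"
    unfolding a_def by simp
  define t where "t = - L / a"
  have ta: "t * a = - L"
    unfolding t_def using \<open>a > 0\<close> by simp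
  have "a\<^sup>2 * (2 * t * L + t\<^sup>2 * M) = 2 * (t * a) * L * a + (t * a)\<^sup>2 * M"
    by (simp add: algebra_simps power2_eq_square)
  also have "\<dots> = L\<^sup>2 * (M - 2 * a)"
    unfolding ta by (simp add: algebra_simps power2_eq_square)
  also have "\<dots> < 0"
    using \<open>L \<noteq> 0\<close> unfolding a_def by (intro mult_pos_neg) auto
  finally show False
    using nonneg[of t] \<open>a > 0\<close> by (simp add: mult_less_0_iff)
qed

lemma midpoint_convex_minimizing_seq_Cauchy:
  fixes Q :: "'a::real_normed_vector \<Rightarrow> real"
  assumes "c > 0"
    and convex: "\<And>a b. c * (norm (a - b))\<^sup>2 \<le> Q a + Q b - 2 * Q ((1/2) *\<^sub>R (a + b))"
    and m_le: "\<And>z. m \<le> Q z" and Y: "\<And>n. Q (Y n) < m + inverse (Suc n)"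
  shows "Cauchy Y"
proof (rule CauchyI)
  fix e :: real
  assume "e > 0"
  then obtain N where N: "inverse (Suc N) < c * e\<^sup>2 / 2"
    using reals_Archimedean \<open>c > 0\<close> by (metis half_gt_zero mult_pos_pos zero_less_power)
  have "norm (Y i - Y j) < e" if "N \<le> i" "N \<le> j" for i j
  proof -
    have "inverse (Suc i) \<le> inverse (Suc N)" "inverse (Suc j) \<le> inverse (Suc N)"
      using that by (simp_all add: le_imp_inverse_le)
    then have "c * (norm (Y i - Y j))\<^sup>2 < c * e\<^sup>2"
      using convex[of "Y i" "Y j"] m_le[of "(1/2) *\<^sub>R (Y i + Y j)"] Y[of i] Y[of j] N by linarith
    then have "(norm (Y i - Y j))\<^sup>2 < e\<^sup>2"
      using \<open>c > 0\<close> by simp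
    then show ?thesis
      using \<open>e > 0\<close> by (simp add: power_less_imp_less_base)
  qed
  then show "\<exists>M. \<forall>i\<ge>M. \<forall>j\<ge>M. norm (Y i - Y j) < e"
    by blast
qed

lemma midpoint_convex_attains_Inf:
  fixes Q :: "'a::banach \<Rightarrow> real"
  assumes cont: "continuous_on UNIV Q" and bdd: "bdd_below (range Q)" and "c > 0"
    and convex: "\<And>a b. c * (norm (a - b))\<^sup>2 \<le> Q a + Q b - 2 * Q ((1/2) *\<^sub>R (a + b))"
  obtains y where "\<And>z. Q y \<le> Q z"
proof -
  define m where "m = Inf (range Q)"
  have m_le: "m \<le> Q z" for z
    unfolding m_def using bdd by (simp add: cInf_lower)
  have "\<exists>y. Q y < m + inverse (Suc n)" for n
    using cInf_lessD[of "range Q" "m + inverse (Suc n)"] unfolding m_def by force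
  then obtain Y where Y: "\<And>n. Q (Y n) < m + inverse (Suc n)"
    by metis
  then have "Cauchy Y"
    by (rule midpoint_convex_minimizing_seq_Cauchy[OF \<open>c > 0\<close> convex m_le])
  then obtain y where "Y \<longlonglongrightarrow> y"
    using Cauchy_convergent_iff convergent_def by blast
  then have "(\<lambda>n. Q (Y n)) \<longlonglongrightarrow> Q y"
    using cont by (simp add: continuous_on_tendsto_compose)
  moreover have "(\<lambda>n. m + inverse (Suc n)) \<longlonglongrightarrow> m"
    using tendsto_add[OF tendsto_const LIMSEQ_inverse_real_of_nat] by simp
  ultimately have "Q y \<le> m"
    using Y by (intro LIMSEQ_le) (auto intro: less_imp_le)
  then show ?thesis
    using m_le by (intro that) (rule order_trans)
qed

definition tikhonov_energy ::
    "('a::real_normed_vector \<Rightarrow> 'b::real_normed_vector) \<Rightarrow> real \<Rightarrow> ('a \<Rightarrow> real) \<Rightarrow> 'a \<Rightarrow> real" where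
  "tikhonov_energy T g f y = (norm (T y))\<^sup>2 + g * (norm y)\<^sup>2 - 2 * f y"

lemma tikhonov_energy_add:
  fixes T :: "'a::real_inner \<Rightarrow> 'b::real_inner"
  assumes "bounded_linear T" and "bounded_linear f"
  shows "tikhonov_energy T g f (y + t *\<^sub>R z) = tikhonov_energy T g f y
    + 2 * t * (inner (T y) (T z) + g * inner y z - f z) + t\<^sup>2 * ((norm (T z))\<^sup>2 + g * (norm z)\<^sup>2)"
proof -
  interpret T: bounded_linear T by fact
  interpret f: bounded_linear f by fact
  show ?thesis
    unfolding tikhonov_energy_def power2_norm_eq_inner
    by (simp add: T.add T.scale f.add f.scale inner_add_left inner_add_right inner_commute
        algebra_simps power2_eq_square)
qed

lemma tikhonov_energy_attains_min:
  fixes T :: "'a::{real_inner,banach} \<Rightarrow> 'b::real_inner"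
  assumes T: "bounded_linear T" and f: "bounded_linear f" and g: "g > 0"
  obtains y where "\<And>z. tikhonov_energy T g f y \<le> tikhonov_energy T g f z"
proof (rule midpoint_convex_attains_Inf)
  obtain K where K: "\<And>x. norm (f x) \<le> norm x * K"
    using bounded_linear.bounded[OF f] by blast
  have "- (K\<^sup>2 / g) \<le> tikhonov_energy T g f y" for y
  proof -
    have "0 \<le> (g * norm y - K)\<^sup>2 / g"
      using g by simp
    also have "\<dots> = g * (norm y)\<^sup>2 - 2 * (norm y * K) + K\<^sup>2 / g"
      using g by (simp add: power2_eq_square field_simps)
    finally show ?thesis
      using K[of y] unfolding tikhonov_energy_def by (smt (verit) real_norm_def zero_le_power2)
  qed
  then show "bdd_below (range (tikhonov_energy T g f))"
    by (intro bdd_belowI2)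
  show "continuous_on UNIV (tikhonov_energy T g f)"
    unfolding tikhonov_energy_def
    by (intro continuous_intros bounded_linear.continuous_on[OF T]
        bounded_linear.continuous_on[OF f])
  show "(g / 2) * (norm (a - b))\<^sup>2 \<le> tikhonov_energy T g f a + tikhonov_energy T g f b
      - 2 * tikhonov_energy T g f ((1/2) *\<^sub>R (a + b))" for a b
  proof -
    define c z where "c = (1/2) *\<^sub>R (a + b)" and "z = (1/2) *\<^sub>R (a - b)"
    have "c + 1 *\<^sub>R z = a" "c + (-1) *\<^sub>R z = b"
      unfolding c_def z_def by (simp_all add: algebra_simps flip: scaleR_add_left)
    then have "tikhonov_energy T g f a + tikhonov_energy T g f b - 2 * tikhonov_energy T g f c
        = 2 * ((norm (T z))\<^sup>2 + g * (norm z)\<^sup>2)"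
      using tikhonov_energy_add[OF T f, of g c 1 z] tikhonov_energy_add[OF T f, of g c "-1" z]
      by simp
    moreover have "(norm z)\<^sup>2 = (norm (a - b))\<^sup>2 / 4"
      unfolding z_def by (simp add: power2_eq_square)
    ultimately show ?thesis
      unfolding c_def by simp
  qed
qed (use g that in auto)

lemma tikhonov_equation_solvable:
  fixes T :: "'a::{real_inner,banach} \<Rightarrow> 'b::real_inner"
  assumes "bounded_linear T" and "bounded_linear f" and "g > 0"
  shows "\<exists>y. \<forall>z. inner (T y) (T z) + g * inner y z = f z"
proof -
  obtain y where min: "\<And>z. tikhonov_energy T g f y \<le> tikhonov_energy T g f z"
    using tikhonov_energy_attains_min[OF assms] by blast
  have "inner (T y) (T z) + g * inner y z - f z = 0" for z
  proof (rule nonneg_quadratic_imp_linear_coeff_zero)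
    fix t
    show "0 \<le> 2 * t * (inner (T y) (T z) + g * inner y z - f z)
        + t\<^sup>2 * ((norm (T z))\<^sup>2 + g * (norm z)\<^sup>2)"
      using min[of "y + t *\<^sub>R z"] unfolding tikhonov_energy_add[OF assms(1,2)] by simp
  qed
  then show ?thesis
    by auto
qed

lemma tikhonov_equation_unique:
  fixes T :: "'a::real_inner \<Rightarrow> 'b::real_inner"
  assumes "bounded_linear T" and g: "g > 0"
    and a: "\<And>z. inner (T a) (T z) + g * inner a z = f z"
    and b: "\<And>z. inner (T b) (T z) + g * inner b z = f z"
  shows "a = b"
proof -
  interpret T: bounded_linear T by fact
  have "(norm (T (a - b)))\<^sup>2 + g * (norm (a - b))\<^sup>2 = 0"
    using a[of "a - b"] b[of "a - b"]
    by (simp add: power2_norm_eq_inner T.diff inner_diff_left algebra_simps)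
  then have "norm (a - b) = 0"
    by (subst (asm) add_nonneg_eq_0_iff) (use g in auto)
  then show ?thesis
    by simp
qed

text \<open>\<open>tikhonov_solve T g f\<close> solves \<open>(T\<^sup>* T + g) y = f\<close> in weak form, \<open>f\<close> standing for a bounded
  functional. For \<open>g \<le> 0\<close> or unbounded \<open>f\<close> a unique solution need not exist, and the value is
  unspecified.\<close>

definition tikhonov_solve :: "('a::real_inner \<Rightarrow> 'b::real_inner) \<Rightarrow> real \<Rightarrow> ('a \<Rightarrow> real) \<Rightarrow> 'a" where
  "tikhonov_solve T g f = (THE y. \<forall>z. inner (T y) (T z) + g * inner y z = f z)"

lemma tikhonov_solve_eqI:
  fixes T :: "'a::real_inner \<Rightarrow> 'b::real_inner"
  assumes "bounded_linear T" "g > 0" and y: "\<And>z. inner (T y) (T z) + g * inner y z = f z"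
  shows "tikhonov_solve T g f = y"
  unfolding tikhonov_solve_def
proof (rule the_equality)
  show "\<forall>z. inner (T y) (T z) + g * inner y z = f z"
    using y ..
  show "y' = y" if "\<forall>z. inner (T y') (T z) + g * inner y' z = f z" for y'
    using tikhonov_equation_unique[OF assms(1,2)] that y by blast
qed

lemma tikhonov_solve:
  fixes T :: "'a::{real_inner,banach} \<Rightarrow> 'b::real_inner"
  assumes "bounded_linear T" "bounded_linear f" "g > 0"
  shows "inner (T (tikhonov_solve T g f)) (T z) + g * inner (tikhonov_solve T g f) z = f z"
proof -
  obtain y where "\<forall>z. inner (T y) (T z) + g * inner y z = f z"
    using tikhonov_equation_solvable[OF assms] by blast
  moreover from this have "tikhonov_solve T g f = y"
    by (intro tikhonov_solve_eqI[OF assms(1,3)]) blast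
  ultimately show ?thesis
    by simp
qed

section \<open>Power series and holomorphic functions\<close>

lemma eval_fps_cnj:
  fixes F :: "complex fps"
  assumes real: "\<And>n. fps_nth F n \<in> \<real>" and z: "norm z < fps_conv_radius F"
  shows "eval_fps F (cnj z) = cnj (eval_fps F z)"
proof -
  have "(\<lambda>n. cnj (fps_nth F n * z ^ n)) sums cnj (eval_fps F z)"
    using sums_eval_fps[OF z] by (simp only: sums_cnj)
  moreover have "cnj (fps_nth F n) = fps_nth F n" for n
    using real Reals_cnj_iff by blast
  ultimately have "(\<lambda>n. fps_nth F n * cnj z ^ n) sums cnj (eval_fps F z)"
    by simp
  moreover have "(\<lambda>n. fps_nth F n * cnj z ^ n) sums eval_fps F (cnj z)"
    using z by (intro sums_eval_fps) simp
  ultimately show ?thesis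
    by (rule sums_unique2[symmetric])
qed

lemma has_field_derivative_eval_fps_shift:
  fixes F :: "complex fps"
  assumes "norm (z - c) < fps_conv_radius F"
  shows "((\<lambda>z. eval_fps F (z - c)) has_field_derivative eval_fps (fps_deriv F) (z - c)) (at z)"
  using DERIV_chain2[OF has_field_derivative_eval_fps[OF assms]
      DERIV_diff[OF DERIV_ident DERIV_const]]
  by simp

lemma inj_on_cnj_commuting_imp_Reals:
  fixes H :: "complex \<Rightarrow> complex"
  assumes inj: "inj_on H (ball (of_real a) r)"
    and cnj: "\<And>z. z \<in> ball (of_real a) r \<Longrightarrow> H (cnj z) = cnj (H z)"
    and z: "z \<in> ball (of_real a) r" and "H z \<in> \<real>"
  shows "z \<in> \<real>"
proof -
  have "of_real a - cnj z = cnj (of_real a - z)"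
    by simp
  then have "dist (of_real a) (cnj z) = dist (of_real a) z"
    by (simp only: dist_norm complex_mod_cnj)
  then have "cnj z \<in> ball (of_real a) r"
    using z by simp
  moreover have "H (cnj z) = H z"
    using cnj[OF z] \<open>H z \<in> \<real>\<close> by (simp add: Reals_cnj_iff)
  ultimately have "cnj z = z"
    using inj_onD[OF inj _ _ z] by blast
  then show ?thesis
    by (simp add: Reals_cnj_iff)
qed

lemma holomorphic_inverse_near:
  fixes H :: "complex \<Rightarrow> complex"
  assumes hol: "H holomorphic_on S" and "open S" and inj: "inj_on H S" and "\<xi> \<in> S"
  obtains \<rho> G where "\<rho> > 0" "G holomorphic_on ball (H \<xi>) \<rho>"
    "\<And>w. w \<in> ball (H \<xi>) \<rho> \<Longrightarrow> G w \<in> S \<and> H (G w) = w"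
proof -
  obtain G where G: "G holomorphic_on H ` S" "\<And>z. z \<in> S \<Longrightarrow> G (H z) = z"
    by (rule holomorphic_has_inverse[OF hol \<open>open S\<close> inj]) blast
  have "open (H ` S)"
    by (rule open_mapping_thm3[OF hol \<open>open S\<close> inj])
  then obtain \<rho> where \<rho>: "\<rho> > 0" "ball (H \<xi>) \<rho> \<subseteq> H ` S"
    using \<open>\<xi> \<in> S\<close> open_contains_ball_eq by blast
  show thesis
  proof (rule that[OF \<rho>(1)])
    show "G holomorphic_on ball (H \<xi>) \<rho>"
      using G(1) \<rho>(2) by (rule holomorphic_on_subset)
    show "G w \<in> S \<and> H (G w) = w" if "w \<in> ball (H \<xi>) \<rho>" for w
      using that \<rho>(2) G(2) by auto
  qed
qed

lemma holomorphic_local_inverse_real: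
  fixes H :: "complex \<Rightarrow> complex"
  assumes hol: "H holomorphic_on ball (of_real a) R" and "R > 0"
    and deriv: "deriv H (of_real a) \<noteq> 0"
    and cnj: "\<And>z. z \<in> ball (of_real a) R \<Longrightarrow> H (cnj z) = cnj (H z)"
    and "r > 0"
  obtains \<rho> G where "\<rho> > 0" "G holomorphic_on ball (H (of_real a)) \<rho>"
    "\<And>w. w \<in> ball (H (of_real a)) \<rho> \<Longrightarrow> G w \<in> ball (of_real a) r \<and> H (G w) = w"
    "\<And>w. w \<in> ball (H (of_real a)) \<rho> \<Longrightarrow> w \<in> \<real> \<Longrightarrow> G w \<in> \<real>"
proof -
  have "complex_of_real a \<in> ball (of_real a) R"
    using \<open>R > 0\<close> by simp
  then obtain r1 where r1: "r1 > 0" "ball (complex_of_real a) r1 \<subseteq> ball (of_real a) R"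
    "inj_on H (ball (of_real a) r1)"
    by (rule has_complex_derivative_locally_injective[OF hol _ open_ball deriv])
  define S where "S = ball (complex_of_real a) (min r1 r)"
  have S_r1: "S \<subseteq> ball (of_real a) r1" and S_r: "S \<subseteq> ball (of_real a) r"
    unfolding S_def by (simp_all add: subset_ball)
  then have S_R: "S \<subseteq> ball (of_real a) R"
    using r1(2) by blast
  have inj: "inj_on H S"
    using r1(3) S_r1 by (rule inj_on_subset)
  have "H holomorphic_on S"
    using hol S_R by (rule holomorphic_on_subset)
  moreover have "open S" "of_real a \<in> S"
    using r1(1) \<open>r > 0\<close> by (simp_all add: S_def)
  ultimately obtain \<rho> G where "\<rho> > 0" "G holomorphic_on ball (H (of_real a)) \<rho>"
    and G: "\<And>w. w \<in> ball (H (of_real a)) \<rho> \<Longrightarrow> G w \<in> S \<and> H (G w) = w"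
    using holomorphic_inverse_near[OF _ _ inj] by metis
  moreover have "G w \<in> \<real>" if "w \<in> ball (H (of_real a)) \<rho>" "w \<in> \<real>" for w
    using inj_on_cnj_commuting_imp_Reals[of H a "min r1 r" "G w"] inj cnj S_R G[OF that(1)] that(2)
    unfolding S_def by (simp add: subset_iff)
  ultimately show thesis
    using S_r that by blast
qed

lemma taylor_coefficient_bound:
  fixes f :: "complex \<Rightarrow> complex"
  assumes hol: "f holomorphic_on ball z \<rho>" and \<delta>: "0 < \<delta>" "\<delta> < \<rho>"
    and B: "\<And>w. w \<in> ball z \<rho> \<Longrightarrow> norm (f w) \<le> B"
  shows "norm ((deriv ^^ k) f z / fact k) \<le> B / \<delta> ^ k"
proof -
  have "continuous_on (cball z \<delta>) f"
    using holomorphic_on_imp_continuous_on[OF hol] by (rule continuous_on_subset) (use \<delta> in auto)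
  moreover have "f holomorphic_on ball z \<delta>"
    using hol by (rule holomorphic_on_subset) (use \<delta> in auto)
  ultimately have "norm ((deriv ^^ k) f z) \<le> fact k * B / \<delta> ^ k"
    using \<delta> B by (intro Cauchy_inequality) (auto simp: dist_norm)
  then show ?thesis
    by (simp add: norm_divide field_simps)
qed

lemma holomorphic_power_series_Re:
  fixes f :: "complex \<Rightarrow> complex"
  assumes "f holomorphic_on ball (of_real t0) \<rho>" and t: "\<bar>t - t0\<bar> < \<rho>"
  shows "(\<lambda>k. Re ((deriv ^^ k) f (of_real t0) / fact k) * (t - t0) ^ k) sums Re (f (of_real t))"
proof -
  have t_ball: "complex_of_real t \<in> ball (of_real t0) \<rho>"
    using t by (simp add: dist_norm abs_minus_commute flip: of_real_diff)
  have "(complex_of_real t - of_real t0) ^ k = of_real ((t - t0) ^ k)" for k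
    by simp
  moreover have "Re (w * of_real x) = Re w * x" for w x
    by simp
  ultimately show ?thesis
    using sums_Re[OF holomorphic_power_series[OF assms(1) t_ball]]
    by (simp only:)
qed

lemma geometric_product_summable_on:
  fixes C p q :: real
  assumes "0 \<le> C" "0 \<le> q" "q < 1" "0 \<le> p" "p < 1"
  shows "(\<lambda>(n, k). C * q ^ n * p ^ k) summable_on UNIV"
proof -
  have rows: "((\<lambda>k. C * q ^ n * p ^ k) has_sum (C / (1 - p) * q ^ n)) UNIV" for n
  proof (rule sums_nonneg_imp_has_sum)
    show "(\<lambda>k. C * q ^ n * p ^ k) sums (C / (1 - p) * q ^ n)"
      using sums_mult[OF geometric_sums[of p], of "C * q ^ n"] assms by (simp add: field_simps)
  qed (use assms in simp)
  have "((\<lambda>n. C / (1 - p) * q ^ n) has_sum (C / (1 - p) * (1 / (1 - q)))) UNIV"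
    using sums_mult[OF geometric_sums[of q], of "C / (1 - p)"] assms
    by (intro sums_nonneg_imp_has_sum) simp_all
  then have "(\<lambda>(n, k). C * q ^ n * p ^ k) summable_on Sigma UNIV (\<lambda>_. UNIV)"
    using rows assms by (intro summable_on_SigmaI[where g = "\<lambda>n. C / (1 - p) * q ^ n"])
      (auto intro: has_sum_imp_summable)
  then show ?thesis
    by simp
qed

lemma sums_swap_geometric_bound:
  fixes F :: "nat \<Rightarrow> nat \<Rightarrow> 'a::banach"
  assumes bound: "\<And>n k. norm (F n k) \<le> C * q ^ n * p ^ k"
    and q: "0 \<le> q" "q < 1" and p: "0 \<le> p" "p < 1"
    and rows: "\<And>n. (\<lambda>k. F n k) sums S n"
  shows "(\<lambda>k. \<Sum>n. F n k) sums (\<Sum>n. S n)"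
proof -
  have "norm (F 0 0) \<le> C"
    using bound[of 0 0] by simp
  then have "0 \<le> C"
    by (rule order_trans[OF norm_ge_zero])
  have "(\<lambda>(n, k). F n k) abs_summable_on UNIV"
    by (rule Infinite_Sum.abs_summable_on_comparison_test'[OF
          geometric_product_summable_on[OF \<open>0 \<le> C\<close> q p]])
      (auto simp: bound)
  then have "(\<lambda>(n, k). F n k) summable_on UNIV \<times> UNIV"
    by (simp add: abs_summable_summable)
  then obtain L' where L': "((\<lambda>(n, k). F n k) has_sum L') (UNIV \<times> UNIV)"
    unfolding summable_on_def by blast
  have row_norms: "summable (\<lambda>k. norm (F n k))" for n
  proof (rule summable_comparison_test')
    show "summable (\<lambda>k. C * q ^ n * p ^ k)"
      using p by (intro summable_mult summable_geometric) simp
  qed (simp add: bound)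
  have col_norms: "summable (\<lambda>n. norm (F n k))" for k
  proof (rule summable_comparison_test')
    show "summable (\<lambda>n. C * p ^ k * q ^ n)"
      using q by (intro summable_mult summable_geometric) simp
  qed (use bound in \<open>simp add: mult_ac\<close>)
  have "(S has_sum L') UNIV"
    by (rule has_sum_SigmaD[OF L']) (simp add: norm_summable_imp_has_sum[OF row_norms rows])
  then have "L' = (\<Sum>n. S n)"
    by (metis has_sum_imp_sums sums_unique)
  moreover have "((\<lambda>(k, n). F n k) has_sum L') (UNIV \<times> UNIV)"
    using L' by (subst (asm) has_sum_swap) simp
  ultimately have "((\<lambda>(k, n). F n k) has_sum (\<Sum>n. S n)) (UNIV \<times> UNIV)"
    by simp
  then have "((\<lambda>k. \<Sum>n. F n k) has_sum (\<Sum>n. S n)) UNIV"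
    by (rule has_sum_SigmaD)
      (simp add: norm_summable_imp_has_sum[OF col_norms] summable_sums
        summable_norm_cancel[OF col_norms])
  then show ?thesis
    by (rule has_sum_imp_sums)
qed

lemma sums_substitute_power_series:
  fixes u :: "nat \<Rightarrow> 'a::banach" and a :: "nat \<Rightarrow> nat \<Rightarrow> real"
  assumes u: "\<And>n. norm (u n) \<le> C * q ^ n" and a: "\<And>n k. \<bar>a n k\<bar> \<le> r ^ n / \<delta> ^ k"
    and rows: "\<And>n. (\<lambda>k. a n k * x ^ k) sums b n"
    and "0 \<le> q" "0 \<le> r" "r * q < 1" "0 < \<delta>" "2 * \<bar>x\<bar> \<le> \<delta>"
  shows "(\<lambda>k. x ^ k *\<^sub>R (\<Sum>n. a n k *\<^sub>R u n)) sums (\<Sum>n. b n *\<^sub>R u n)"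
proof -
  have "norm (u 0) \<le> C"
    using u[of 0] by simp
  then have "0 \<le> C"
    by (rule order_trans[OF norm_ge_zero])
  have term_bound: "norm (a n k *\<^sub>R u n) \<le> C / \<delta> ^ k * (r * q) ^ n" for n k
  proof -
    have "norm (a n k *\<^sub>R u n) \<le> r ^ n / \<delta> ^ k * (C * q ^ n)"
      unfolding norm_scaleR using \<open>0 \<le> r\<close> \<open>0 < \<delta>\<close> by (intro mult_mono a u) auto
    then show ?thesis
      by (simp add: power_mult_distrib field_simps)
  qed
  have F_bound: "norm (x ^ k *\<^sub>R (a n k *\<^sub>R u n)) \<le> C * (r * q) ^ n * (1 / 2) ^ k" for n k
  proof -
    have "norm (x ^ k *\<^sub>R (a n k *\<^sub>R u n)) \<le> \<bar>x\<bar> ^ k * (C / \<delta> ^ k * (r * q) ^ n)"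
      unfolding norm_scaleR[of "x ^ k"] power_abs by (intro mult_left_mono term_bound) simp
    also have "\<dots> = C * (r * q) ^ n * (\<bar>x\<bar> / \<delta>) ^ k"
      by (simp add: power_divide)
    also have "\<dots> \<le> C * (r * q) ^ n * (1 / 2) ^ k"
      using assms(4-) \<open>0 \<le> C\<close> by (intro mult_left_mono power_mono) (auto simp: field_simps)
    finally show ?thesis .
  qed
  have "(\<lambda>k. x ^ k *\<^sub>R (a n k *\<^sub>R u n)) sums (b n *\<^sub>R u n)" for n
    using sums_scaleR_left[OF rows[of n]] by (simp add: mult.commute)
  then have "(\<lambda>k. \<Sum>n. x ^ k *\<^sub>R (a n k *\<^sub>R u n)) sums (\<Sum>n. b n *\<^sub>R u n)"
    using assms(4-6) by (intro sums_swap_geometric_bound[OF F_bound]) auto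
  moreover have "summable (\<lambda>n. a n k *\<^sub>R u n)" for k
  proof (rule summable_comparison_test')
    show "summable (\<lambda>n. C / \<delta> ^ k * (r * q) ^ n)"
      using assms(4-6) by (intro summable_mult summable_geometric) simp
  qed (rule term_bound)
  ultimately show ?thesis
    by (simp add: suminf_scaleR_right)
qed

lemma power_series_compose_holomorphic:
  fixes u :: "nat \<Rightarrow> 'a::banach" and \<Gamma> :: "complex \<Rightarrow> complex"
  assumes u: "\<And>n. norm (u n) \<le> C * q ^ n" and "0 \<le> q"
    and "\<rho> > 0" and hol: "\<Gamma> holomorphic_on ball (of_real t0) \<rho>"
    and \<Gamma>_ball: "\<And>w. w \<in> ball (of_real t0) \<rho> \<Longrightarrow> \<Gamma> w \<in> ball (of_real c) r" and "r * q < 1"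
    and \<Gamma>_real: "\<And>t. \<bar>t - t0\<bar> < \<rho> \<Longrightarrow> \<Gamma> (of_real t) \<in> \<real>"
  shows "\<exists>R>0. \<exists>A. \<forall>t. \<bar>t - t0\<bar> < R \<longrightarrow>
           (\<lambda>k. (t - t0) ^ k *\<^sub>R A k) sums (\<Sum>n. (c - Re (\<Gamma> (of_real t))) ^ n *\<^sub>R u n)"
proof -
  have "dist (of_real c) (\<Gamma> (of_real t0)) < r"
    using \<Gamma>_ball[of "of_real t0"] \<open>\<rho> > 0\<close> by simp
  then have "0 \<le> r"
    by (meson less_imp_le order_trans zero_le_dist)
  define D where "D n w = (of_real c - \<Gamma> w) ^ n" for n w
  define a where "a n k = Re ((deriv ^^ k) (D n) (of_real t0) / fact k)" for n k
  have holD: "D n holomorphic_on ball (of_real t0) \<rho>" for n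
    unfolding D_def by (intro holomorphic_intros hol)
  have a_bound: "\<bar>a n k\<bar> \<le> r ^ n / (\<rho> / 2) ^ k" for n k
    unfolding a_def
  proof (rule order_trans[OF abs_Re_le_cmod taylor_coefficient_bound[OF holD]])
    fix w :: complex
    assume "w \<in> ball (of_real t0) \<rho>"
    then have "norm (of_real c - \<Gamma> w) \<le> r"
      using \<Gamma>_ball by (simp add: dist_norm less_imp_le)
    then show "norm (D n w) \<le> r ^ n"
      unfolding D_def norm_power by (intro power_mono) auto
  qed (use \<open>\<rho> > 0\<close> in auto)
  have "(\<lambda>k. (t - t0) ^ k *\<^sub>R (\<Sum>n. a n k *\<^sub>R u n)) sums (\<Sum>n. (c - Re (\<Gamma> (of_real t))) ^ n *\<^sub>R u n)"
    if t: "\<bar>t - t0\<bar> < \<rho> / 4" for t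
  proof (rule sums_substitute_power_series[OF u a_bound])
    have "\<bar>t - t0\<bar> < \<rho>"
      using t \<open>\<rho> > 0\<close> by simp
    then have "D n (of_real t) = of_real ((c - Re (\<Gamma> (of_real t))) ^ n)" for n
      unfolding D_def using of_real_Re[OF \<Gamma>_real] by (metis of_real_diff of_real_power)
    then show "(\<lambda>k. a n k * (t - t0) ^ k) sums (c - Re (\<Gamma> (of_real t))) ^ n" for n
      using holomorphic_power_series_Re[OF holD \<open>\<bar>t - t0\<bar> < \<rho>\<close>, of n] unfolding a_def by simp
  qed (use t \<open>0 \<le> q\<close> \<open>0 \<le> r\<close> \<open>r * q < 1\<close> \<open>\<rho> > 0\<close> in auto)
  then show ?thesis
    using \<open>\<rho> > 0\<close> by (intro exI[of _ "\<rho> / 4"] conjI exI[of _ "\<lambda>k. \<Sum>n. a n k *\<^sub>R u n"]) auto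
qed

section \<open>The extremal problem\<close>

locale extremal_problem =
  fixes T :: "'a::{real_inner,banach} \<Rightarrow> 'b::real_inner" and x0 :: 'b
  assumes bounded_linear_T: "bounded_linear T"
    and dense_range: "closure (range T) = UNIV"
    and x0_nonzero: "x0 \<noteq> 0"
begin

sublocale T: bounded_linear T
  by (rule bounded_linear_T)

text \<open>\<open>yreg g = (T\<^sup>* T + g)\<^sup>-\<^sup>1 T\<^sup>* x0\<close> and \<open>resolvent g = (T\<^sup>* T + g)\<^sup>-\<^sup>1\<close>;
  \<open>tikhonov_value g\<close> is the minimum of \<open>tikhonov g\<close>.\<close>

definition yreg :: "real \<Rightarrow> 'a" where
  "yreg g = tikhonov_solve T g (\<lambda>z. inner x0 (T z))"

definition resolvent :: "real \<Rightarrow> 'a \<Rightarrow> 'a" where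
  "resolvent g w = tikhonov_solve T g (inner w)"

definition tikhonov :: "real \<Rightarrow> 'a \<Rightarrow> real" where
  "tikhonov g y = (norm (T y - x0))\<^sup>2 + g * (norm y)\<^sup>2"

definition discrepancy :: "real \<Rightarrow> real" where
  "discrepancy g = norm (T (yreg g) - x0)"

definition tikhonov_value :: "real \<Rightarrow> real" where
  "tikhonov_value g = tikhonov g (yreg g)"

lemma yreg_eq:
  assumes "g > 0"
  shows "inner (T (yreg g)) (T z) + g * inner (yreg g) z = inner x0 (T z)"
  unfolding yreg_def
  using bounded_linear_T bounded_linear_compose[OF bounded_linear_inner_right bounded_linear_T]
    assms
  by (rule tikhonov_solve)

lemma resolvent_eq:
  assumes "g > 0"
  shows "inner (T (resolvent g w)) (T z) + g * inner (resolvent g w) z = inner w z"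
  unfolding resolvent_def using bounded_linear_T bounded_linear_inner_right assms
  by (rule tikhonov_solve)

lemma tikhonov_yreg_add:
  assumes "g > 0"
  shows "tikhonov g (yreg g + z) = tikhonov g (yreg g) + (norm (T z))\<^sup>2 + g * (norm z)\<^sup>2"
  using yreg_eq[OF assms, of z] unfolding tikhonov_def power2_norm_eq_inner
  by (simp add: T.add inner_add_left inner_add_right inner_diff_left inner_diff_right
      inner_commute algebra_simps)

lemma tikhonov_yreg_le:
  assumes "g > 0"
  shows "tikhonov g (yreg g) \<le> tikhonov g y"
  using tikhonov_yreg_add[OF assms, of "y - yreg g"] assms by simp

lemma tikhonov_value_eq:
  assumes "g > 0"
  shows "tikhonov_value g = (norm x0)\<^sup>2 - inner x0 (T (yreg g))"
  using yreg_eq[OF assms, of "yreg g"]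
  unfolding tikhonov_value_def tikhonov_def power2_norm_eq_inner
  by (simp add: inner_diff_left inner_diff_right inner_commute algebra_simps)

lemma discrepancy_sq: "(discrepancy g)\<^sup>2 = tikhonov_value g - g * (norm (yreg g))\<^sup>2"
  unfolding discrepancy_def tikhonov_value_def tikhonov_def by simp

text \<open>\<open>g\<close> acts as a Lagrange multiplier: \<open>yreg g\<close> minimizes \<open>tikhonov g\<close>, so no vector with
  \<open>norm (T y - x0) \<le> discrepancy g\<close> can have smaller norm.\<close>

lemma extremal_vector_discrepancy:
  assumes g: "g > 0"
  shows "extremal_vector T x0 (discrepancy g) = yreg g"
proof -
  let ?e = "discrepancy g" and ?y = "yreg g"
  have gap: "g * (norm ?y)\<^sup>2 + g * (norm (y - ?y))\<^sup>2 \<le> g * (norm y)\<^sup>2"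
    if "norm (T y - x0) \<le> ?e" for y
  proof -
    have "tikhonov g y = tikhonov g ?y + (norm (T (y - ?y)))\<^sup>2 + g * (norm (y - ?y))\<^sup>2"
      using tikhonov_yreg_add[OF g, of "y - ?y"] by simp
    moreover have "tikhonov g y \<le> ?e\<^sup>2 + g * (norm y)\<^sup>2"
      unfolding tikhonov_def using that by (simp add: power_mono)
    ultimately show ?thesis
      unfolding tikhonov_def discrepancy_def using zero_le_power2[of "norm (T (y - ?y))"]
      by linarith
  qed
  have min: "norm ?y \<le> norm y" if "norm (T y - x0) \<le> ?e" for y
  proof -
    have "g * (norm ?y)\<^sup>2 \<le> g * (norm y)\<^sup>2"
      using gap[OF that] g by (smt (verit) mult_nonneg_nonneg zero_le_power2)
    then show ?thesis
      using g by (auto intro: power2_le_imp_le)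
  qed
  have feasible: "norm (T ?y - x0) \<le> ?e"
    by (simp add: discrepancy_def)
  have "Inf {norm y | y. norm (T y - x0) \<le> ?e} = norm ?y"
    by (rule cInf_eq_minimum) (use feasible min in auto)
  moreover have "y = ?y" if "norm (T y - x0) \<le> ?e" "norm y = norm ?y" for y
    using gap[OF that(1)] that(2) g by (simp add: mult_le_0_iff)
  ultimately show ?thesis
    unfolding extremal_vector_def using feasible by (intro the_equality) auto
qed

lemma yreg_nonzero:
  assumes "g > 0"
  shows "yreg g \<noteq> 0"
proof
  assume "yreg g = 0"
  then have "range T \<subseteq> {w. inner x0 w = 0}"
    using yreg_eq[OF assms] by auto
  then have "closure (range T) \<subseteq> {w. inner x0 w = 0}"
    by (intro closure_minimal closed_hyperplane)
  then have "x0 \<in> {w. inner x0 w = 0}"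
    using dense_range by blast
  then show False
    using x0_nonzero by simp
qed

lemma norm_yreg_le:
  assumes g: "g > 0"
  shows "g * norm (yreg g) \<le> norm x0 * onorm T"
proof -
  let ?y = "yreg g"
  have "g * (norm ?y)\<^sup>2 \<le> inner x0 (T ?y)"
    using yreg_eq[OF g, of ?y] inner_ge_zero[of "T ?y"] unfolding power2_norm_eq_inner by linarith
  also have "\<dots> \<le> norm x0 * (onorm T * norm ?y)"
    using norm_cauchy_schwarz[of x0 "T ?y"] onorm[OF bounded_linear_T, of ?y]
    by (meson mult_left_mono norm_ge_zero order_trans)
  finally have "(g * norm ?y) * norm ?y \<le> (norm x0 * onorm T) * norm ?y"
    by (simp add: power2_eq_square algebra_simps)
  then show ?thesis
    using yreg_nonzero[OF g] by simp
qed

lemma norm_yreg_diff_le: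
  assumes g: "g > 0" and g': "g' > 0"
  shows "norm (yreg g - yreg g') \<le> norm x0 * onorm T * \<bar>g - g'\<bar> / (g * g')"
proof -
  define d where "d = yreg g - yreg g'"
  have "(norm (T d))\<^sup>2 + g * (norm d)\<^sup>2 = (g' - g) * inner (yreg g') d"
    using yreg_eq[OF g, of d] yreg_eq[OF g', of d] unfolding d_def power2_norm_eq_inner
    by (simp add: T.diff inner_diff_left algebra_simps)
  also have "\<dots> \<le> \<bar>g - g'\<bar> * \<bar>inner (yreg g') d\<bar>"
    by (metis abs_ge_self abs_minus_commute abs_mult)
  also have "\<dots> \<le> \<bar>g - g'\<bar> * (norm (yreg g') * norm d)"
    by (intro mult_left_mono Cauchy_Schwarz_ineq2) simp
  finally have "g * (norm d)\<^sup>2 \<le> \<bar>g - g'\<bar> * (norm (yreg g') * norm d)"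
    using zero_le_power2[of "norm (T d)"] by linarith
  then have "(g * norm d) * norm d \<le> (\<bar>g - g'\<bar> * norm (yreg g')) * norm d"
    by (simp add: power2_eq_square mult.assoc)
  then have "g * norm d \<le> \<bar>g - g'\<bar> * norm (yreg g')"
    by (cases "norm d = 0") (use g in auto)
  then have "g * g' * norm d \<le> \<bar>g - g'\<bar> * (g' * norm (yreg g'))"
    using mult_left_mono[of _ _ g'] g' by (simp add: algebra_simps)
  also have "\<dots> \<le> \<bar>g - g'\<bar> * (norm x0 * onorm T)"
    using norm_yreg_le[OF g'] by (rule mult_left_mono) simp
  finally show ?thesis
    unfolding d_def using g g' by (simp add: field_simps)
qed

lemma yreg_lipschitz:
  assumes "a > 0"
  shows "(norm x0 * onorm T / a\<^sup>2)-lipschitz_on {a<..} yreg"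
proof (rule lipschitz_onI)
  fix g g'
  assume "g \<in> {a<..}" "g' \<in> {a<..}"
  then have "a\<^sup>2 \<le> g * g'" "g * g' > 0"
    using \<open>a > 0\<close> by (auto simp: power2_eq_square intro: mult_mono)
  then have "norm x0 * onorm T * \<bar>g - g'\<bar> / (g * g') \<le> norm x0 * onorm T * \<bar>g - g'\<bar> / a\<^sup>2"
    using \<open>a > 0\<close> onorm_pos_le[OF bounded_linear_T] by (intro divide_left_mono) auto
  then show "dist (yreg g) (yreg g') \<le> norm x0 * onorm T / a\<^sup>2 * dist g g'"
    using norm_yreg_diff_le[of g g'] \<open>g \<in> {a<..}\<close> \<open>g' \<in> {a<..}\<close> \<open>a > 0\<close>
    by (simp add: dist_norm dist_real_def)
qed (use onorm_pos_le[OF bounded_linear_T] in simp)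

lemma continuous_on_yreg: "continuous_on {0<..} yreg"
proof -
  have "{0<..} = (\<Union>a\<in>{0::real<..}. {a<..})"
    by (auto dest: dense)
  also have "continuous_on \<dots> yreg"
    by (intro continuous_on_open_UN lipschitz_on_continuous_on[OF yreg_lipschitz]) auto
  finally show ?thesis .
qed

lemma continuous_on_discrepancy: "continuous_on {0<..} discrepancy"
  unfolding discrepancy_def by (intro continuous_intros T.continuous_on continuous_on_yreg)

lemma discrepancy_less:
  assumes e: "e > 0"
  shows "\<exists>g>0. discrepancy g < e"
proof -
  have "\<forall>\<epsilon>>0. \<exists>y. norm (T y - x0) < \<epsilon>"
    using dense_range closure_approachable[of x0 "range T"] by (auto simp: dist_norm)
  then obtain y where y: "norm (T y - x0) < e / 2"
    using e half_gt_zero by blast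
  define N where "N = (norm y)\<^sup>2 + 1"
  have N: "N > 0"
    unfolding N_def by (simp add: add_nonneg_pos)
  define g where "g = e\<^sup>2 / 4 / N"
  have g: "g > 0"
    unfolding g_def using e N by simp
  have "g * (norm y)\<^sup>2 \<le> g * N"
    using g unfolding N_def by simp
  also have "\<dots> = e\<^sup>2 / 4"
    unfolding g_def using N by simp
  finally have "g * (norm y)\<^sup>2 \<le> e\<^sup>2 / 4" .
  moreover have "(norm (T y - x0))\<^sup>2 < e\<^sup>2 / 4"
    using power_strict_mono[OF y norm_ge_zero, of 2] by (simp add: power_divide)
  ultimately have "tikhonov g y < e\<^sup>2"
    unfolding tikhonov_def using zero_le_power2[of e] by linarith
  moreover have "(discrepancy g)\<^sup>2 \<le> tikhonov g y"
    using tikhonov_yreg_le[OF g, of y] g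
    unfolding discrepancy_def tikhonov_def by (smt (verit) mult_nonneg_nonneg zero_le_power2)
  ultimately show ?thesis
    using g e by (metis order_le_less_trans power_less_imp_less_base less_imp_le)
qed

lemma discrepancy_greater:
  assumes e: "e < norm x0"
  shows "\<exists>g>0. e < discrepancy g"
proof -
  define C where "C = onorm T * (norm x0 * onorm T)"
  define g where "g = (C + 1) / (norm x0 - e)"
  have C: "C \<ge> 0"
    unfolding C_def using onorm_pos_le[OF bounded_linear_T] by simp
  then have g: "g > 0"
    unfolding g_def using e by simp
  have "norm (T (yreg g)) \<le> onorm T * norm (yreg g)"
    by (rule onorm[OF bounded_linear_T])
  also have "\<dots> \<le> C / g"
    using mult_left_mono[OF norm_yreg_le[OF g] onorm_pos_le[OF bounded_linear_T]] g
    unfolding C_def by (simp add: pos_le_divide_eq algebra_simps)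
  also have "\<dots> < norm x0 - e"
    unfolding g_def using e C by (simp add: field_simps)
  finally have "norm (T (yreg g)) < norm x0 - e" .
  moreover have "norm x0 - norm (T (yreg g)) \<le> discrepancy g"
    using norm_triangle_ineq2[of x0 "T (yreg g)"] unfolding discrepancy_def
    by (simp add: norm_minus_commute)
  ultimately show ?thesis
    using g by (intro exI[of _ g]) linarith
qed

lemma discrepancy_surj:
  assumes "0 < e" "e < norm x0"
  shows "\<exists>g>0. discrepancy g = e"
proof -
  obtain g1 g2 where "g1 > 0" "discrepancy g1 < e" "g2 > 0" "e < discrepancy g2"
    using discrepancy_less discrepancy_greater assms by blast
  moreover have "connected (discrepancy ` {0<..})"
    by (rule connected_continuous_image[OF continuous_on_discrepancy connected_Ioi])
  ultimately have "e \<in> discrepancy ` {0<..}"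
    unfolding connected_iff_interval by (meson greaterThan_iff image_eqI less_imp_le)
  then show ?thesis
    by auto
qed

lemma tikhonov_value_diff:
  assumes g: "g > 0" and g': "g' > 0"
  shows "tikhonov_value g' - tikhonov_value g = (g' - g) * inner (yreg g) (yreg g')"
  using yreg_eq[OF g, of "yreg g'"] yreg_eq[OF g', of "yreg g"]
  unfolding tikhonov_value_eq[OF g] tikhonov_value_eq[OF g']
  by (simp add: inner_commute algebra_simps)

lemma tikhonov_value_has_derivative:
  assumes g: "g > 0"
  shows "(tikhonov_value has_real_derivative (norm (yreg g))\<^sup>2) (at g)"
proof -
  have "isCont yreg g"
    using continuous_on_yreg g by (simp add: continuous_on_eq_continuous_at)
  then have "((\<lambda>g'. inner (yreg g) (yreg g')) \<longlongrightarrow> (norm (yreg g))\<^sup>2) (at g)"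
    unfolding isCont_def power2_norm_eq_inner by (intro tendsto_intros)
  moreover have "eventually (\<lambda>g'. inner (yreg g) (yreg g')
      = (tikhonov_value g' - tikhonov_value g) / (g' - g)) (at g)"
    unfolding eventually_at
    by (rule exI[of _ g]) (use g tikhonov_value_diff[OF g] in \<open>auto simp: dist_real_def\<close>)
  ultimately show ?thesis
    unfolding has_field_derivative_iff by (rule Lim_transform_eventually)
qed

lemma norm_resolvent_le:
  assumes g: "g > 0"
  shows "g * norm (resolvent g w) \<le> norm w"
proof -
  let ?v = "resolvent g w"
  have "g * (norm ?v)\<^sup>2 \<le> inner w ?v"
    using resolvent_eq[OF g, of w ?v] inner_ge_zero[of "T ?v"] unfolding power2_norm_eq_inner
    by linarith
  also have "\<dots> \<le> norm w * norm ?v"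
    by (rule norm_cauchy_schwarz)
  finally have "(g * norm ?v) * norm ?v \<le> norm w * norm ?v"
    by (simp add: power2_eq_square mult.assoc)
  then show ?thesis
    by (cases "norm ?v = 0") (use g in auto)
qed

lemma discrepancy_pos:
  assumes g: "g > 0"
  shows "discrepancy g > 0"
proof (rule ccontr)
  assume "\<not> discrepancy g > 0"
  then have "T (yreg g) = x0"
    unfolding discrepancy_def by simp
  then have "g * (norm (yreg g))\<^sup>2 = 0"
    using yreg_eq[OF g, of "yreg g"] by (simp add: power2_norm_eq_inner)
  then show False
    using g yreg_nonzero[OF g] by simp
qed

end

section \<open>Analyticity near a fixed multiplier\<close>

locale extremal_problem_at = extremal_problem +
  fixes g0 :: real
  assumes g0_pos: "g0 > 0"
begin

text \<open>By the resolvent identity, \<open>yreg g = (\<Sum>n. (g0 - g) ^ n *\<^sub>R yreg_coeff n)\<close> (Neumann series).\<close>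

definition yreg_coeff :: "nat \<Rightarrow> 'a" where
  "yreg_coeff n = (resolvent g0 ^^ n) (yreg g0)"

lemma yreg_coeff_0 [simp]: "yreg_coeff 0 = yreg g0"
  and yreg_coeff_Suc [simp]: "yreg_coeff (Suc n) = resolvent g0 (yreg_coeff n)"
  by (simp_all add: yreg_coeff_def)

lemma norm_yreg_coeff_le: "norm (yreg_coeff n) \<le> norm (yreg_coeff 0) * (1 / g0) ^ n"
proof (induction n)
  case (Suc n)
  have "norm (yreg_coeff (Suc n)) \<le> norm (yreg_coeff n) / g0"
    using norm_resolvent_le[OF g0_pos, of "yreg_coeff n"] g0_pos by (simp add: field_simps)
  also have "\<dots> \<le> norm (yreg_coeff 0) * (1 / g0) ^ n / g0"
    using Suc.IH g0_pos by (simp add: divide_right_mono)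
  finally show ?case
    by (simp add: field_simps)
qed simp

lemma summable_yreg_coeff_series:
  assumes c: "\<bar>c\<bar> < g0"
  shows "summable (\<lambda>n. c ^ n *\<^sub>R yreg_coeff n)"
proof (rule summable_comparison_test')
  show "summable (\<lambda>n. norm (yreg_coeff 0) * (\<bar>c\<bar> / g0) ^ n)"
    using c by (intro summable_mult summable_geometric) simp
  have "\<bar>c\<bar> ^ n * norm (yreg_coeff n) \<le> \<bar>c\<bar> ^ n * (norm (yreg_coeff 0) * (1 / g0) ^ n)" for n
    by (intro mult_left_mono norm_yreg_coeff_le) simp
  then show "norm (c ^ n *\<^sub>R yreg_coeff n) \<le> norm (yreg_coeff 0) * (\<bar>c\<bar> / g0) ^ n" for n
    by (simp add: power_divide power_abs mult_ac)
qed

lemma yreg_sums: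
  assumes g: "\<bar>g - g0\<bar> < g0"
  shows "(\<lambda>n. (g0 - g) ^ n *\<^sub>R yreg_coeff n) sums yreg g"
proof -
  define c where "c = g0 - g"
  have "g > 0"
    using g by linarith
  have "summable (\<lambda>n. c ^ n *\<^sub>R yreg_coeff n)"
    using g by (intro summable_yreg_coeff_series) (simp add: c_def abs_minus_commute)
  then obtain s where s: "(\<lambda>n. c ^ n *\<^sub>R yreg_coeff n) sums s"
    by (auto simp: summable_def)
  have "inner (T s) (T z) + g * inner s z = inner x0 (T z)" for z
  proof -
    define B where "B y = inner (T y) (T z) + g0 * inner y z" for y
    have "bounded_linear B"
      unfolding B_def
      by (intro bounded_linear_add bounded_linear_const_mult bounded_linear_inner_left
          bounded_linear_compose[OF bounded_linear_inner_left bounded_linear_T])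
    from bounded_linear.sums[OF this s]
    have "(\<lambda>n. c ^ n * B (yreg_coeff n)) sums B s"
      by (simp add: B_def T.scale algebra_simps)
    then have "(\<lambda>n. c ^ Suc n * B (yreg_coeff (Suc n))) sums (B s - B (yreg_coeff 0))"
      by (subst sums_Suc_iff) simp
    moreover have "B (yreg_coeff (Suc n)) = inner (yreg_coeff n) z" for n
      unfolding B_def yreg_coeff_Suc by (rule resolvent_eq[OF g0_pos])
    moreover have "B (yreg_coeff 0) = inner x0 (T z)"
      unfolding B_def yreg_coeff_0 by (rule yreg_eq[OF g0_pos])
    ultimately have "(\<lambda>n. c * (c ^ n * inner (yreg_coeff n) z)) sums (B s - inner x0 (T z))"
      by (simp add: mult.assoc)
    moreover have "(\<lambda>n. c * (c ^ n * inner (yreg_coeff n) z)) sums (c * inner s z)"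
      using bounded_linear.sums[OF bounded_linear_inner_left s, of z] by (intro sums_mult) simp
    ultimately have "B s - inner x0 (T z) = c * inner s z"
      by (rule sums_unique2)
    then show ?thesis
      unfolding B_def c_def by (simp add: algebra_simps)
  qed
  then have "yreg g = s"
    unfolding yreg_def by (rule tikhonov_solve_eqI[OF bounded_linear_T \<open>g > 0\<close>])
  then show ?thesis
    using s c_def by simp
qed

lemma inner_x0_yreg_coeff_Suc:
  "inner x0 (T (yreg_coeff (Suc n))) = inner (yreg_coeff 0) (yreg_coeff n)"
  using yreg_eq[OF g0_pos, of "yreg_coeff (Suc n)"]
    resolvent_eq[OF g0_pos, of "yreg_coeff n" "yreg_coeff 0"]
  by (simp add: inner_commute)

definition tikhonov_value_coeff :: "nat \<Rightarrow> real" where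
  "tikhonov_value_coeff n =
     (if n = 0 then (norm x0)\<^sup>2 else 0) - (-1) ^ n * inner x0 (T (yreg_coeff n))"

lemma tikhonov_value_sums:
  assumes g: "\<bar>g - g0\<bar> < g0"
  shows "(\<lambda>n. tikhonov_value_coeff n * (g - g0) ^ n) sums tikhonov_value g"
proof -
  have "(\<lambda>n. (g0 - g) ^ n * inner x0 (T (yreg_coeff n))) sums inner x0 (T (yreg g))"
    using bounded_linear.sums[OF
        bounded_linear_compose[OF bounded_linear_inner_right bounded_linear_T] yreg_sums[OF g]]
    by (simp add: T.scale)
  from sums_diff[OF sums_single[of 0 "\<lambda>_. (norm x0)\<^sup>2"] this]
  have "(\<lambda>n. (if n = 0 then (norm x0)\<^sup>2 else 0) - (g0 - g) ^ n * inner x0 (T (yreg_coeff n)))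
      sums tikhonov_value g"
    using g by (simp add: tikhonov_value_eq)
  moreover have "(if n = 0 then (norm x0)\<^sup>2 else 0) - (g0 - g) ^ n * inner x0 (T (yreg_coeff n))
      = tikhonov_value_coeff n * (g - g0) ^ n" for n
  proof -
    have "(g0 - g) ^ n = (-1) ^ n * (g - g0) ^ n"
      by (metis minus_diff_eq power_minus)
    then show ?thesis
      by (simp add: tikhonov_value_coeff_def algebra_simps)
  qed
  ultimately show ?thesis
    by simp
qed

lemma tikhonov_value_coeff_2_neg: "tikhonov_value_coeff 2 < 0"
proof -
  have "yreg_coeff 1 \<noteq> 0"
  proof
    assume "yreg_coeff 1 = 0"
    then have "inner (yreg_coeff 0) (yreg_coeff 0) = 0"
      using resolvent_eq[OF g0_pos, of "yreg_coeff 0" "yreg_coeff 0"] by simp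
    then show False
      using yreg_nonzero[OF g0_pos] by simp
  qed
  then have "0 < (norm (T (yreg_coeff 1)))\<^sup>2 + g0 * (norm (yreg_coeff 1))\<^sup>2"
    using g0_pos by (intro add_nonneg_pos) auto
  also have "\<dots> = inner (yreg_coeff 0) (yreg_coeff 1)"
    using resolvent_eq[OF g0_pos, of "yreg_coeff 0" "yreg_coeff 1"]
    by (simp add: power2_norm_eq_inner inner_commute)
  also have "\<dots> = inner x0 (T (yreg_coeff 2))"
    using inner_x0_yreg_coeff_Suc[of 1] by (simp add: numeral_2_eq_2)
  finally show ?thesis
    by (simp add: tikhonov_value_coeff_def)
qed

definition tikhonov_value_fps :: "complex fps" where
  "tikhonov_value_fps = Abs_fps (\<lambda>n. of_real (tikhonov_value_coeff n))"

lemma fps_conv_radius_tikhonov_value_fps: "ereal g0 \<le> fps_conv_radius tikhonov_value_fps"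
  unfolding fps_conv_radius_def
proof (rule conv_radius_geI_ex')
  fix r :: real
  assume "0 < r" "ereal r < ereal g0"
  then have "(\<lambda>n. of_real (tikhonov_value_coeff n * r ^ n))
      sums complex_of_real (tikhonov_value (g0 + r))"
    using tikhonov_value_sums[of "g0 + r"] by (intro sums_of_real) simp
  then show "summable (\<lambda>n. fps_nth tikhonov_value_fps n * of_real r ^ n)"
    unfolding tikhonov_value_fps_def by (auto simp: summable_def)
qed

lemma within_conv_radius:
  assumes "z \<in> ball (of_real g0) g0"
  shows "norm (z - of_real g0) < fps_conv_radius tikhonov_value_fps"
    and "norm (z - of_real g0) < fps_conv_radius (fps_deriv tikhonov_value_fps)"
    and "norm (z - of_real g0) < fps_conv_radius (fps_deriv (fps_deriv tikhonov_value_fps))"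
proof -
  have "ereal (norm (z - of_real g0)) < ereal g0"
    using assms by (simp add: dist_norm norm_minus_commute)
  then show "norm (z - of_real g0) < fps_conv_radius tikhonov_value_fps"
    and "norm (z - of_real g0) < fps_conv_radius (fps_deriv tikhonov_value_fps)"
    and "norm (z - of_real g0) < fps_conv_radius (fps_deriv (fps_deriv tikhonov_value_fps))"
    using fps_conv_radius_tikhonov_value_fps fps_conv_radius_deriv[of tikhonov_value_fps]
      fps_conv_radius_deriv[of "fps_deriv tikhonov_value_fps"]
    by (meson less_le_trans order.trans)+
qed

text \<open>Since \<open>tikhonov_value' g = (norm (yreg g))\<^sup>2\<close>,
  \<open>discrepancy\<^sup>2 = tikhonov_value - g * tikhonov_value'\<close>; inserting the Taylor series of
  \<open>tikhonov_value\<close> at \<open>g0\<close> gives a holomorphic extension.\<close>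

definition discrepancy_sq_complex :: "complex \<Rightarrow> complex" where
  "discrepancy_sq_complex z = eval_fps tikhonov_value_fps (z - of_real g0)
     - z * eval_fps (fps_deriv tikhonov_value_fps) (z - of_real g0)"

lemma discrepancy_sq_complex_has_derivative:
  assumes z: "z \<in> ball (of_real g0) g0"
  shows "(discrepancy_sq_complex has_field_derivative
           - z * eval_fps (fps_deriv (fps_deriv tikhonov_value_fps)) (z - of_real g0)) (at z)"
  unfolding discrepancy_sq_complex_def
  by (rule derivative_eq_intros has_field_derivative_eval_fps_shift within_conv_radius[OF z]
      | simp)+

lemma holomorphic_discrepancy_sq_complex:
  "discrepancy_sq_complex holomorphic_on ball (of_real g0) g0"
  using discrepancy_sq_complex_has_derivative holomorphic_on_open[OF open_ball] by blast

lemma deriv_discrepancy_sq_complex: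
  "deriv discrepancy_sq_complex (of_real g0) = of_real (- 2 * g0 * tikhonov_value_coeff 2)"
  using DERIV_imp_deriv[OF discrepancy_sq_complex_has_derivative, of "of_real g0"] g0_pos
  by (simp add: eval_fps_at_0 tikhonov_value_fps_def numeral_2_eq_2)

lemma discrepancy_sq_complex_cnj:
  assumes "z \<in> ball (of_real g0) g0"
  shows "discrepancy_sq_complex (cnj z) = cnj (discrepancy_sq_complex z)"
proof -
  have "eval_fps F (cnj z - of_real g0) = cnj (eval_fps F (z - of_real g0))"
    if "\<And>n. fps_nth F n \<in> \<real>" "norm (z - of_real g0) < fps_conv_radius F" for F
    using eval_fps_cnj[OF that] by simp
  moreover have "fps_nth tikhonov_value_fps n \<in> \<real>"
    and "fps_nth (fps_deriv tikhonov_value_fps) n \<in> \<real>" for n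
    by (simp_all add: tikhonov_value_fps_def)
  ultimately show ?thesis
    unfolding discrepancy_sq_complex_def using within_conv_radius[OF assms] by simp
qed

lemma eval_tikhonov_value_fps:
  assumes "\<bar>g - g0\<bar> < g0"
  shows "eval_fps tikhonov_value_fps (of_real g - of_real g0) = of_real (tikhonov_value g)"
proof -
  have "complex_of_real g \<in> ball (of_real g0) g0"
    using assms by (simp add: dist_norm abs_minus_commute flip: of_real_diff)
  moreover have "(\<lambda>n. fps_nth tikhonov_value_fps n * (of_real g - of_real g0) ^ n)
      sums complex_of_real (tikhonov_value g)"
    using sums_of_real[OF tikhonov_value_sums[OF assms]] by (simp add: tikhonov_value_fps_def)
  ultimately show ?thesis
    by (rule sums_unique2[OF sums_eval_fps[OF within_conv_radius(1)]])
qed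

lemma eval_deriv_tikhonov_value_fps:
  assumes g: "\<bar>g - g0\<bar> < g0"
  shows "eval_fps (fps_deriv tikhonov_value_fps) (of_real g - of_real g0) = of_real ((norm (yreg g))\<^sup>2)"
proof (rule vector_derivative_unique_at)
  have ball: "complex_of_real t \<in> ball (of_real g0) g0" if "t \<in> ball g0 g0" for t
    using that by (simp add: dist_norm flip: of_real_diff)
  have "g \<in> ball g0 g0"
    using g by (simp add: dist_real_def abs_minus_commute)
  show "((\<lambda>t. eval_fps tikhonov_value_fps (of_real t - of_real g0)) has_vector_derivative
      eval_fps (fps_deriv tikhonov_value_fps) (of_real g - of_real g0)) (at g)"
    by (rule has_vector_derivative_real_field has_field_derivative_eval_fps_shift
        within_conv_radius ball \<open>g \<in> ball g0 g0\<close>)+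
  show "((\<lambda>t. eval_fps tikhonov_value_fps (of_real t - of_real g0)) has_vector_derivative
      of_real ((norm (yreg g))\<^sup>2)) (at g)"
    using \<open>g \<in> ball g0 g0\<close> g eval_tikhonov_value_fps
    by (intro has_vector_derivative_transform_within_open[OF
          has_vector_derivative_of_real[OF tikhonov_value_has_derivative], of g "ball g0 g0"])
      (auto simp: dist_real_def abs_minus_commute)
qed

lemma discrepancy_sq_complex_of_real:
  assumes "\<bar>g - g0\<bar> < g0"
  shows "discrepancy_sq_complex (of_real g) = of_real ((discrepancy g)\<^sup>2)"
  using eval_tikhonov_value_fps[OF assms] eval_deriv_tikhonov_value_fps[OF assms] assms
  unfolding discrepancy_sq_complex_def discrepancy_sq by simp

lemma discrepancy_Re_eqI:
  assumes "z \<in> \<real>" "z \<in> ball (of_real g0) g0" "discrepancy_sq_complex z = (of_real t)\<^sup>2" "t \<ge> 0"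
  shows "discrepancy (Re z) = t"
proof -
  define g where "g = Re z"
  have z: "z = of_real g"
    using assms(1) by (simp add: g_def)
  then have "\<bar>g - g0\<bar> < g0"
    using assms(2) by (simp add: dist_norm abs_minus_commute flip: of_real_diff)
  then have "discrepancy_sq_complex z = of_real ((discrepancy g)\<^sup>2)"
    unfolding z by (rule discrepancy_sq_complex_of_real)
  then have "(discrepancy g)\<^sup>2 = t\<^sup>2"
    using assms(3) by (metis of_real_eq_iff of_real_power)
  then show ?thesis
    using \<open>t \<ge> 0\<close> unfolding g_def by (simp add: discrepancy_def power2_eq_iff_nonneg)
qed

lemma discrepancy_sq_complex_local_inverse:
  obtains \<rho> G where "\<rho> > 0" "G holomorphic_on ball ((of_real (discrepancy g0))\<^sup>2) \<rho>"
    "\<And>w. w \<in> ball ((of_real (discrepancy g0))\<^sup>2) \<rho> \<Longrightarrow>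
      G w \<in> ball (of_real g0) (g0 / 2) \<and> discrepancy_sq_complex (G w) = w"
    "\<And>w. w \<in> ball ((of_real (discrepancy g0))\<^sup>2) \<rho> \<Longrightarrow> w \<in> \<real> \<Longrightarrow> G w \<in> \<real>"
proof -
  have "discrepancy_sq_complex (of_real g0) = (of_real (discrepancy g0))\<^sup>2"
    using discrepancy_sq_complex_of_real[of g0] g0_pos by simp
  moreover have "deriv discrepancy_sq_complex (of_real g0) \<noteq> 0"
    unfolding deriv_discrepancy_sq_complex using tikhonov_value_coeff_2_neg g0_pos by simp
  ultimately show thesis
    using holomorphic_local_inverse_real[OF holomorphic_discrepancy_sq_complex g0_pos _
        discrepancy_sq_complex_cnj half_gt_zero[OF g0_pos]] that by metis
qed

text \<open>\<open>\<Gamma> t = G (t\<^sup>2)\<close>, with \<open>G\<close> the local inverse of \<open>discrepancy_sq_complex\<close>, is the multiplier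
  belonging to the radius \<open>t\<close>.\<close>

lemma discrepancy_local_inverse:
  obtains \<rho> \<Gamma> where "\<rho> > 0" "\<Gamma> holomorphic_on ball (of_real (discrepancy g0)) \<rho>"
    "\<And>w. w \<in> ball (of_real (discrepancy g0)) \<rho> \<Longrightarrow> \<Gamma> w \<in> ball (of_real g0) (g0 / 2)"
    "\<And>t. \<bar>t - discrepancy g0\<bar> < \<rho> \<Longrightarrow> \<Gamma> (of_real t) \<in> \<real> \<and> discrepancy (Re (\<Gamma> (of_real t))) = t"
proof -
  define e where "e = discrepancy g0"
  have "e > 0"
    unfolding e_def by (rule discrepancy_pos[OF g0_pos])
  obtain \<rho>1 G where "\<rho>1 > 0" and holG: "G holomorphic_on ball ((of_real e)\<^sup>2) \<rho>1"
    and G: "\<And>w. w \<in> ball ((of_real e)\<^sup>2) \<rho>1 \<Longrightarrow>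
      G w \<in> ball (of_real g0) (g0 / 2) \<and> discrepancy_sq_complex (G w) = w"
    and G_real: "\<And>w. w \<in> ball ((of_real e)\<^sup>2) \<rho>1 \<Longrightarrow> w \<in> \<real> \<Longrightarrow> G w \<in> \<real>"
    unfolding e_def by (rule discrepancy_sq_complex_local_inverse) blast
  have "continuous (at (of_real e)) (\<lambda>w::complex. w\<^sup>2)"
    by (intro continuous_intros)
  from this[unfolded continuous_at_ball, rule_format, OF \<open>\<rho>1 > 0\<close>]
  obtain \<delta> where "\<delta> > 0"
    and \<delta>: "(\<lambda>w::complex. w\<^sup>2) ` ball (of_real e) \<delta> \<subseteq> ball ((of_real e)\<^sup>2) \<rho>1"
    by blast
  define \<rho> where "\<rho> = min \<delta> e"
  have sq: "w\<^sup>2 \<in> ball ((of_real e)\<^sup>2) \<rho>1" if "w \<in> ball (of_real e) \<rho>" for w :: complex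
    using \<delta> that by (auto simp: image_subset_iff \<rho>_def)
  show thesis
  proof (rule that[of \<rho> "\<lambda>w. G (w\<^sup>2)", unfolded e_def[symmetric]])
    show "\<rho> > 0"
      using \<open>\<delta> > 0\<close> \<open>e > 0\<close> by (simp add: \<rho>_def)
    have "(G \<circ> (\<lambda>w. w\<^sup>2)) holomorphic_on ball (of_real e) \<rho>"
      by (rule holomorphic_on_compose_gen[OF _ holG]) (use sq in \<open>auto intro: holomorphic_intros\<close>)
    then show "(\<lambda>w. G (w\<^sup>2)) holomorphic_on ball (of_real e) \<rho>"
      by (simp add: o_def)
    show "G (w\<^sup>2) \<in> ball (of_real g0) (g0 / 2)" if "w \<in> ball (of_real e) \<rho>" for w :: complex
      using G[OF sq[OF that]] by blast
    show "G ((of_real t)\<^sup>2) \<in> \<real> \<and> discrepancy (Re (G ((of_real t)\<^sup>2))) = t"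
      if t: "\<bar>t - e\<bar> < \<rho>" for t
    proof -
      have "complex_of_real t \<in> ball (of_real e) \<rho>"
        using t by (simp add: dist_norm abs_minus_commute flip: of_real_diff)
      then have in_ball: "(complex_of_real t)\<^sup>2 \<in> ball ((of_real e)\<^sup>2) \<rho>1"
        by (rule sq)
      have "G ((of_real t)\<^sup>2) \<in> ball (of_real g0) g0"
        using G[OF in_ball] subset_ball[of "g0 / 2" g0] g0_pos by auto
      moreover have "t \<ge> 0"
        using t by (simp add: \<rho>_def abs_less_iff)
      ultimately show ?thesis
        using G_real[OF in_ball] G[OF in_ball] discrepancy_Re_eqI[OF G_real[OF in_ball]] by simp
    qed
  qed
qed

lemma extremal_vector_local_power_series:
  "\<exists>R>0. \<exists>A. \<forall>t. \<bar>t - discrepancy g0\<bar> < R \<longrightarrow>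
     (\<lambda>k. (t - discrepancy g0) ^ k *\<^sub>R A k) sums extremal_vector T x0 t"
proof -
  obtain \<rho> \<Gamma> where "\<rho> > 0" and hol: "\<Gamma> holomorphic_on ball (of_real (discrepancy g0)) \<rho>"
    and \<Gamma>_ball: "\<And>w. w \<in> ball (of_real (discrepancy g0)) \<rho> \<Longrightarrow> \<Gamma> w \<in> ball (of_real g0) (g0 / 2)"
    and \<Gamma>_real: "\<And>t. \<bar>t - discrepancy g0\<bar> < \<rho> \<Longrightarrow>
      \<Gamma> (of_real t) \<in> \<real> \<and> discrepancy (Re (\<Gamma> (of_real t))) = t"
    by (rule discrepancy_local_inverse) blast
  obtain R A where "R > 0" and A: "\<And>t. \<bar>t - discrepancy g0\<bar> < R \<Longrightarrow>
      (\<lambda>k. (t - discrepancy g0) ^ k *\<^sub>R A k)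
        sums (\<Sum>n. (g0 - Re (\<Gamma> (of_real t))) ^ n *\<^sub>R yreg_coeff n)"
    using power_series_compose_holomorphic[OF norm_yreg_coeff_le _ \<open>\<rho> > 0\<close> hol \<Gamma>_ball] \<Gamma>_real g0_pos
    by auto
  have "(\<lambda>k. (t - discrepancy g0) ^ k *\<^sub>R A k) sums extremal_vector T x0 t"
    if t: "\<bar>t - discrepancy g0\<bar> < min R \<rho>" for t
  proof -
    define g where "g = Re (\<Gamma> (of_real t))"
    have "complex_of_real t \<in> ball (of_real (discrepancy g0)) \<rho>"
      using t by (simp add: dist_norm abs_minus_commute flip: of_real_diff)
    then have "\<Gamma> (of_real t) \<in> ball (of_real g0) (g0 / 2)"
      by (rule \<Gamma>_ball)
    moreover have "\<Gamma> (of_real t) = of_real g"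
      using \<Gamma>_real[of t] t unfolding g_def by simp
    ultimately have "\<bar>g - g0\<bar> < g0"
      using g0_pos by (simp add: dist_norm abs_minus_commute flip: of_real_diff)
    then have "extremal_vector T x0 t = (\<Sum>n. (g0 - g) ^ n *\<^sub>R yreg_coeff n)"
      using extremal_vector_discrepancy[of g] \<Gamma>_real[of t] t yreg_sums[of g]
      unfolding g_def by (auto simp: sums_iff)
    then show ?thesis
      using A[of t] t unfolding g_def by simp
  qed
  then show ?thesis
    using \<open>R > 0\<close> \<open>\<rho> > 0\<close> by (intro exI[of _ "min R \<rho>"] exI[of _ A]) auto
qed

end

instance complex_hilbert \<subseteq> banach ..

theorem mainTheorem6:
  fixes T :: "'a::complex_hilbert \<Rightarrow> 'a" and x0 :: 'a
  assumes "separable_space TYPE('a)"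
    and "infinite_dimensional TYPE('a)"
    and "bounded_clinear_op T"
    and "closure (range T) = UNIV"
    and "x0 \<noteq> 0"
  shows "real_analytic_on (\<lambda>\<epsilon>. extremal_vector T x0 \<epsilon>) {0<..<norm x0}"
proof -
  interpret extremal_problem T x0
    by (rule extremal_problem.intro) (use assms(3-5) in \<open>simp_all add: bounded_clinear_op_def\<close>)
  show ?thesis
    unfolding real_analytic_on_def
  proof
    fix t0
    assume "t0 \<in> {0<..<norm x0}"
    then obtain g0 where "g0 > 0" "discrepancy g0 = t0"
      using discrepancy_surj by auto
    then interpret extremal_problem_at T x0 g0
      by unfold_locales
    show "\<exists>r>0. \<exists>a. \<forall>t. \<bar>t - t0\<bar> < r \<longrightarrow> (\<lambda>n. (t - t0) ^ n *\<^sub>R a n) sums extremal_vector T x0 t"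
      using extremal_vector_local_power_series \<open>discrepancy g0 = t0\<close> by simp
  qed
qed

end
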